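(* Let $F=\{f_i\}_{i=1}^N$ be a frame for an $n$-dimensional Hilbert space $\mathcal{H}_n$ with frame operator $S_F$. Let $L=\max\{\|f_i\|\,\|S_F^{-1}f_i\|:1\le i\le N\}$, $\eta_1=\{i:\|f_i\|\,\|S_F^{-1}f_i\|=L\}$, $\eta_2=\{1,\dots,N\}\setminus\eta_1$, and $H_j=\mathrm{span}\{f_i:i\in\eta_j\}$ for $j=1,2$. Assume (i) $H_1\cap H_2=\{0\}$; (ii) $\|f_i\|=c$ for all $i\in\eta_1$, for some constant $c>0$; (iii) the set $\{f_i:i\in\eta_2\}$ is linearly independent. Then for every $p>2$ the canonical dual frame $S_F^{-1}F=\{S_F^{-1}f_i\}_{i=1}^N$ is a $1$-erasure Frobenius-optimal dual of $F$, i.e. $S_F^{-1}F\in\zeta_{\mathfrak{F}}^{(1),p}(F)$.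
   Context: $F$ is a frame for $\mathcal{H}_n$ if there are $0<A'\le B'$ with $A'\|f\|^2\le\sum_i|\langle f,f_i\rangle|^2\le B'\|f\|^2$ for all $f$. Analysis operator $T_Ff=(\langle f,f_i\rangle)_{i=1}^N$, frame operator $S_F=T_F^*T_F$ (positive invertible). $G=\{g_i\}_{i=1}^N$ is a dual of $F$ if $f=\sum_i\langle f,f_i\rangle g_i$ for all $f\in\mathcal{H}_n$. For a dual $G$ and $p>1$, $\mathrm{AE}_{\mathfrak{F}}^{(1),p}(F,G)=\{\frac1N\sum_{D\in\mathcal{D}^{(1)}}\|T_G^*DT_F\|_{\mathfrak{F}}^p\}^{1/p}=\{\frac1N\sum_{i=1}^N(\|f_i\|\,\|g_i\|)^p\}^{1/p}$, where $\mathcal{D}^{(1)}$ is the set of $N\times N$ diagonal matrices with exactly one diagonal entry $1$ and the rest $0$, and $\|\cdot\|_{\mathfrak{F}}$ is the Frobenius norm. $\zeta_{\mathfrak{F}}^{(1),p}(F)$ is the set of duals $G$ of $F$ minimizing $\mathrm{AE}_{\mathfrak{F}}^{(1),p}(F,G)$ over all duals of $F$. *)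

theory Defs
  imports "HOL-Analysis.Analysis"
begin

text \<open>The n-dimensional Hilbert space H_n is modelled as complex^'n with the
standard inner product (linear in the first argument); its norm is the
library norm on complex^'n. Frames are families f :: nat => complex^'n indexed by 1..N.\<close>

definition cinner :: "complex^'n \<Rightarrow> complex^'n \<Rightarrow> complex" where
  "cinner x y = (\<Sum>j\<in>UNIV. x $ j * cnj (y $ j))"

definition is_frame :: "(nat \<Rightarrow> complex^'n) \<Rightarrow> nat \<Rightarrow> bool" where
  "is_frame F N \<longleftrightarrow> (\<exists>A B. 0 < A \<and> A \<le> B \<and>
     (\<forall>x. A * (norm x)^2 \<le> (\<Sum>i\<in>{1..N}. (cmod (cinner x (F i)))^2) \<and>
          (\<Sum>i\<in>{1..N}. (cmod (cinner x (F i)))^2) \<le> B * (norm x)^2))"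

definition frame_op :: "(nat \<Rightarrow> complex^'n) \<Rightarrow> nat \<Rightarrow> complex^'n \<Rightarrow> complex^'n" where
  "frame_op F N x = (\<Sum>i\<in>{1..N}. cinner x (F i) *s F i)"

definition frame_op_inv :: "(nat \<Rightarrow> complex^'n) \<Rightarrow> nat \<Rightarrow> complex^'n \<Rightarrow> complex^'n" where
  "frame_op_inv F N = inv (frame_op F N)"

definition is_dual :: "(nat \<Rightarrow> complex^'n) \<Rightarrow> (nat \<Rightarrow> complex^'n) \<Rightarrow> nat \<Rightarrow> bool" where
  "is_dual F G N \<longleftrightarrow> (\<forall>x. x = (\<Sum>i\<in>{1..N}. cinner x (F i) *s G i))"

definition AE1p :: "real \<Rightarrow> (nat \<Rightarrow> complex^'n) \<Rightarrow> (nat \<Rightarrow> complex^'n) \<Rightarrow> nat \<Rightarrow> real" where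
  "AE1p p F G N = ((1 / real N) * (\<Sum>i\<in>{1..N}. (norm (F i) * norm (G i)) powr p)) powr (1 / p)"

definition optimal_dual_1p :: "real \<Rightarrow> (nat \<Rightarrow> complex^'n) \<Rightarrow> nat \<Rightarrow> (nat \<Rightarrow> complex^'n) \<Rightarrow> bool" where
  "optimal_dual_1p p F N G \<longleftrightarrow> is_dual F G N \<and>
     (\<forall>G'. is_dual F G' N \<longrightarrow> AE1p p F G N \<le> AE1p p F G' N)"

end

theory Submission
  imports Defs
begin

text \<open>Every dual of F has the form S^-1 F + U where U satisfies sum_i <x,f_i> u_i = 0
for all x. Such a U vanishes at every f_j outside the span of the other frame vectors, which
by (i) and (iii) covers all of \<eta>2, and it satisfies sum_i <u_i, S^-1 f_i> = 0. On \<eta>1 both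
||f_i|| = c and ||S^-1 f_i|| = L/c are constant, so the tangent inequality
||g + u||^p \<ge> ||g||^p + p ||g||^(p-2) Re <u,g> of the convex function ||.||^p has the same
coefficient for every i in \<eta>1, and summed over \<eta>1 the linear terms cancel.\<close>

lemma Re_cinner: "Re (cinner x y) = inner x y"
  unfolding cinner_def inner_vec_def inner_complex_def by (simp add: Re_sum)

lemma cinner_add_left: "cinner (x + y) z = cinner x z + cinner y z"
  unfolding cinner_def by (simp add: distrib_right sum.distrib)

lemma cinner_scale_left: "cinner (c *s x) z = c * cinner x z"
  unfolding cinner_def by (simp add: sum_distrib_left mult.assoc)

lemma cinner_sum_left: "cinner (sum f A) z = (\<Sum>a\<in>A. cinner (f a) z)"
  unfolding cinner_def by (simp add: sum_distrib_right sum.swap[of _ A])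

lemma cinner_commute: "cinner y x = cnj (cinner x y)"
  unfolding cinner_def by (simp add: mult.commute)

lemma cinner_axis_left: "cinner (axis k 1) x = cnj (x $ k)"
proof -
  have "(axis k 1) $ j * cnj (x $ j) = (if j = k then cnj (x $ k) else 0)" for j
    by (simp add: axis_def)
  then show ?thesis
    unfolding cinner_def by simp
qed

lemma linear_frame_op: "Vector_Spaces.linear (*s) (*s) (frame_op F N)"
  unfolding Vector_Spaces.linear_iff frame_op_def
  by (auto simp: vec.vector_space_axioms cinner_add_left cinner_scale_left
      vec.scale_left_distrib sum.distrib vec.scale_sum_right)

lemma Re_cinner_frame_op_self:
  "Re (cinner (frame_op F N x) x) = (\<Sum>i\<in>{1..N}. (cmod (cinner x (F i)))\<^sup>2)"
  unfolding frame_op_def cinner_sum_left cinner_scale_left Re_sum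
  by (rule sum.cong) (simp_all add: cinner_commute[of "F _" x] complex_mult_cnj cmod_power2)

lemma inj_frame_op:
  assumes "is_frame F N"
  shows "inj (frame_op F N)"
  unfolding vec.linear_inj_iff_eq_0[OF linear_frame_op]
proof (intro allI impI)
  fix x assume "frame_op F N x = 0"
  then have "(\<Sum>i\<in>{1..N}. (cmod (cinner x (F i)))\<^sup>2) = 0"
    using Re_cinner_frame_op_self[of F N x] by (simp add: cinner_def)
  moreover obtain A where "A > 0" "A * (norm x)\<^sup>2 \<le> (\<Sum>i\<in>{1..N}. (cmod (cinner x (F i)))\<^sup>2)"
    using assms unfolding is_frame_def by blast
  ultimately show "x = 0"
    by (simp add: mult_le_0_iff)
qed

lemma frame_op_inv_frame_op:
  assumes "is_frame F N"
  shows "frame_op_inv F N (frame_op F N x) = x"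
  unfolding frame_op_inv_def by (rule inv_f_f[OF inj_frame_op[OF assms]])

lemma linear_frame_op_inv:
  assumes "is_frame F N"
  shows "Vector_Spaces.linear (*s) (*s) (frame_op_inv F N)"
  unfolding frame_op_inv_def
  by (rule vec.inj_linear_imp_inv_linear[OF linear_frame_op inj_frame_op[OF assms]])

lemma is_dual_canonical:
  assumes "is_frame F N"
  shows "is_dual F (\<lambda>i. frame_op_inv F N (F i)) N"
  unfolding is_dual_def
proof
  fix x
  interpret M: Vector_Spaces.linear "(*s)" "(*s)" "frame_op_inv F N"
    by (rule linear_frame_op_inv[OF assms])
  have "(\<Sum>i\<in>{1..N}. cinner x (F i) *s frame_op_inv F N (F i))
      = frame_op_inv F N (frame_op F N x)"
    unfolding frame_op_def by (simp add: M.sum M.scale)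
  then show "x = (\<Sum>i\<in>{1..N}. cinner x (F i) *s frame_op_inv F N (F i))"
    by (simp add: frame_op_inv_frame_op[OF assms])
qed

lemma coefficient_eq_0_if_not_in_span:
  fixes F :: "'i \<Rightarrow> 'a::field^'n"
  assumes "finite I" "j \<in> I" "(\<Sum>i\<in>I. c i *s F i) = 0" "F j \<notin> vec.span (F ` (I - {j}))"
  shows "c j = 0"
proof (rule ccontr)
  assume "c j \<noteq> 0"
  have "c j *s F j = - (\<Sum>i\<in>I - {j}. c i *s F i)"
    using assms(1-3) by (simp add: sum.remove eq_neg_iff_add_eq_0)
  then have "F j = inverse (c j) *s - (\<Sum>i\<in>I - {j}. c i *s F i)"
    using \<open>c j \<noteq> 0\<close> by (metis vec.scale_one vec.scale_scale left_inverse)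
  also have "\<dots> = (\<Sum>i\<in>I - {j}. (- c i / c j) *s F i)"
    by (simp add: vec.scale_sum_right sum_negf[symmetric] divide_inverse mult.commute)
  also have "\<dots> \<in> vec.span (F ` (I - {j}))"
    by (intro vec.span_sum vec.span_scale vec.span_base imageI)
  finally show False
    using assms(4) by blast
qed

definition dual_perturbation :: "(nat \<Rightarrow> complex^'n) \<Rightarrow> (nat \<Rightarrow> complex^'n) \<Rightarrow> nat \<Rightarrow> bool" where
  "dual_perturbation F U N \<longleftrightarrow> (\<forall>x. (\<Sum>i\<in>{1..N}. cinner x (F i) *s U i) = 0)"

lemma dual_perturbation_diff:
  assumes "is_dual F G N" "is_dual F G' N"
  shows "dual_perturbation F (\<lambda>i. G' i - G i) N"
  using assms unfolding dual_perturbation_def is_dual_def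
  by (simp add: vec.scale_right_diff_distrib sum_subtractf)

lemma dual_perturbation_transpose:
  assumes "dual_perturbation F U N"
  shows "(\<Sum>i\<in>{1..N}. cnj (U i $ l) *s F i) = 0"
proof (rule vec_eq_iff[THEN iffD2], rule allI)
  fix k
  have "(\<Sum>i\<in>{1..N}. cinner (axis k 1) (F i) *s U i) $ l = 0"
    using assms unfolding dual_perturbation_def by simp
  then have "(\<Sum>i\<in>{1..N}. cnj (F i $ k) * U i $ l) = 0"
    by (simp add: sum_component cinner_axis_left)
  then have "cnj (\<Sum>i\<in>{1..N}. cnj (F i $ k) * U i $ l) = 0"
    by simp
  then show "(\<Sum>i\<in>{1..N}. cnj (U i $ l) *s F i) $ k = 0 $ k"
    by (simp add: sum_component cnj_sum mult.commute)
qed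

lemma dual_perturbation_eq_0_if_not_in_span:
  assumes "dual_perturbation F U N" "j \<in> {1..N}" "F j \<notin> vec.span (F ` ({1..N} - {j}))"
  shows "U j = 0"
proof (rule vec_eq_iff[THEN iffD2], rule allI)
  fix l
  have "cnj (U j $ l) = 0"
    using coefficient_eq_0_if_not_in_span[OF _ assms(2)
        dual_perturbation_transpose[OF assms(1)] assms(3)]
    by simp
  then show "U j $ l = 0 $ l"
    by simp
qed

lemma sum_cinner_dual_perturbation_linear:
  assumes "dual_perturbation F U N" "Vector_Spaces.linear (*s) (*s) T"
  shows "(\<Sum>i\<in>{1..N}. cinner (U i) (T (F i))) = 0"
proof -
  interpret T: Vector_Spaces.linear "(*s)" "(*s)" T by fact
  have "(\<Sum>i\<in>{1..N}. cinner (U i) (T (F i)))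
      = (\<Sum>l\<in>UNIV. cnj ((\<Sum>i\<in>{1..N}. cnj (U i $ l) *s T (F i)) $ l))"
    unfolding cinner_def by (simp add: sum_component cnj_sum mult.commute) (rule sum.swap)
  also have "\<dots> = (\<Sum>l\<in>UNIV. cnj (T (\<Sum>i\<in>{1..N}. cnj (U i $ l) *s F i) $ l))"
    by (simp add: T.sum T.scale)
  also have "\<dots> = 0"
    by (simp only: dual_perturbation_transpose[OF assms(1)] T.zero) simp
  finally show ?thesis .
qed

lemma not_in_span_if_independent_complement:
  assumes "vec.span (F ` A) \<inter> vec.span (F ` B) = {0}"
    and "inj_on F B" "vec.independent (F ` B)" "j \<in> B"
  shows "F j \<notin> vec.span (F ` A \<union> F ` (B - {j}))"
proof
  assume "F j \<in> vec.span (F ` A \<union> F ` (B - {j}))"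
  then obtain a b where ab: "F j = a + b" "a \<in> vec.span (F ` A)" "b \<in> vec.span (F ` (B - {j}))"
    by (auto simp: vec.span_Un)
  have "b \<in> vec.span (F ` B)"
    using ab(3) vec.span_mono[of "F ` (B - {j})" "F ` B"] by auto
  moreover have "F j \<in> vec.span (F ` B)"
    using assms(4) by (simp add: vec.span_base)
  ultimately have "a \<in> vec.span (F ` B)"
    using ab(1) vec.span_diff by force
  then have "a = 0"
    using ab(2) assms(1) by auto
  then have "F j \<in> vec.span (F ` B - {F j})"
    using ab(1,3) assms(2,4) by (simp add: inj_on_image_set_diff)
  then show False
    using assms(3,4) unfolding vec.dependent_def by blast
qed

lemma powr_above_tangent:
  fixes r t p :: real
  assumes "p \<ge> 1" "r > 0" "t \<ge> 0"
  shows "r powr p + p * r powr (p - 1) * (t - r) \<le> t powr p"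
proof (cases "t = 0")
  case True
  have "r powr p + p * r powr (p - 1) * (t - r) = (1 - p) * r powr p"
    using True assms(2) by (simp add: powr_diff algebra_simps)
  also have "\<dots> \<le> 0"
    using assms(1) by (simp add: mult_nonpos_nonneg)
  finally show ?thesis
    using True by simp
next
  case False
  have "p * r powr (p - 1) * (t - r) \<le> t powr p - r powr p"
  proof (rule convex_on_imp_above_tangent[where A = "{0<..}"])
    show "((\<lambda>x. x powr p) has_field_derivative p * r powr (p - 1)) (at r within {0<..})"
      by (rule has_field_derivative_at_within[OF has_real_derivative_powr[OF assms(2)]])
  qed (use assms False powr_convex in \<open>auto simp: interior_open\<close>)
  then show ?thesis
    by simp
qed

lemma norm_powr_above_tangent:
  fixes g u :: "'a::real_inner"
  assumes "p \<ge> 1"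
  shows "norm g powr p + p * norm g powr (p - 2) * inner u g \<le> norm (g + u) powr p"
proof (cases "g = 0")
  case True
  then show ?thesis
    by simp
next
  case False
  let ?r = "norm g" and ?t = "norm (g + u)"
  have r: "?r > 0"
    using False by simp
  have "?r\<^sup>2 + inner u g = inner (g + u) g"
    by (simp add: inner_add_left power2_norm_eq_inner)
  also have "\<dots> \<le> ?t * ?r"
    by (rule norm_cauchy_schwarz)
  finally have "inner u g \<le> ?r * (?t - ?r)"
    by (simp add: algebra_simps power2_eq_square)
  then have "p * ?r powr (p - 2) * inner u g \<le> p * ?r powr (p - 2) * (?r * (?t - ?r))"
    using assms by (intro mult_left_mono) simp_all
  also have "\<dots> = p * ?r powr (p - 1) * (?t - ?r)"
    using powr_add[of ?r "p - 2" 1] r by simp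
  finally show ?thesis
    using powr_above_tangent[OF assms r norm_ge_zero[of "g + u"]] by linarith
qed

lemma sum_norm_powr_le_perturbed:
  fixes g u :: "'i \<Rightarrow> 'a::real_inner"
  assumes "p \<ge> 1" "\<And>i. i \<in> I \<Longrightarrow> norm (g i) = r" "(\<Sum>i\<in>I. inner (u i) (g i)) = 0"
  shows "(\<Sum>i\<in>I. norm (g i) powr p) \<le> (\<Sum>i\<in>I. norm (g i + u i) powr p)"
proof -
  have "(\<Sum>i\<in>I. norm (g i) powr p)
      = (\<Sum>i\<in>I. norm (g i) powr p + p * r powr (p - 2) * inner (u i) (g i))"
    using assms(3) by (simp add: sum.distrib sum_distrib_left[symmetric] mult.assoc)
  also have "\<dots> \<le> (\<Sum>i\<in>I. norm (g i + u i) powr p)"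
  proof (rule sum_mono)
    fix i assume "i \<in> I"
    then show "norm (g i) powr p + p * r powr (p - 2) * inner (u i) (g i) \<le> norm (g i + u i) powr p"
      using norm_powr_above_tangent[OF assms(1), of "g i" "u i"] assms(2) by simp
  qed
  finally show ?thesis .
qed

lemma is_dual_eq_canonical_if_not_in_span:
  assumes "is_frame F N" "is_dual F G N" "j \<in> {1..N}" "F j \<notin> vec.span (F ` ({1..N} - {j}))"
  shows "G j = frame_op_inv F N (F j)"
  using dual_perturbation_eq_0_if_not_in_span[OF
      dual_perturbation_diff[OF is_dual_canonical[OF assms(1)] assms(2)] assms(3,4)]
  by simp

lemma sum_powr_canonical_le_if_norms_constant:
  assumes frame: "is_frame F N" and dual: "is_dual F G N" and "p \<ge> 1" and "I \<subseteq> {1..N}"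
    and agree: "\<And>i. i \<in> {1..N} - I \<Longrightarrow> G i = frame_op_inv F N (F i)"
    and norm_F: "\<And>i. i \<in> I \<Longrightarrow> norm (F i) = c"
    and norm_canonical: "\<And>i. i \<in> I \<Longrightarrow> norm (frame_op_inv F N (F i)) = r"
  shows "(\<Sum>i\<in>{1..N}. (norm (F i) * norm (frame_op_inv F N (F i))) powr p)
       \<le> (\<Sum>i\<in>{1..N}. (norm (F i) * norm (G i)) powr p)"
proof -
  let ?g = "\<lambda>i. frame_op_inv F N (F i)"
  define U where "U i = G i - ?g i" for i
  have U: "dual_perturbation F U N"
    unfolding U_def by (rule dual_perturbation_diff[OF is_dual_canonical[OF frame] dual])
  have "(\<Sum>i\<in>I. inner (U i) (?g i)) = Re (\<Sum>i\<in>{1..N}. cinner (U i) (?g i))"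
    unfolding Re_sum Re_cinner
    by (rule sum.mono_neutral_left) (use \<open>I \<subseteq> {1..N}\<close> agree in \<open>auto simp: U_def\<close>)
  also have "\<dots> = 0"
    by (simp only: sum_cinner_dual_perturbation_linear[OF U linear_frame_op_inv[OF frame]]) simp
  finally have "(\<Sum>i\<in>I. norm (?g i) powr p) \<le> (\<Sum>i\<in>I. norm (G i) powr p)"
    using sum_norm_powr_le_perturbed[where g = ?g and u = U, OF \<open>p \<ge> 1\<close> norm_canonical]
    by (simp add: U_def)
  then have "(\<Sum>i\<in>I. (norm (F i) * norm (?g i)) powr p)
      \<le> (\<Sum>i\<in>I. (norm (F i) * norm (G i)) powr p)"
    using norm_F by (simp add: powr_mult sum_distrib_left[symmetric] mult_left_mono)
  moreover have "(\<Sum>i\<in>{1..N} - I. (norm (F i) * norm (?g i)) powr p)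
      = (\<Sum>i\<in>{1..N} - I. (norm (F i) * norm (G i)) powr p)"
    using agree by simp
  ultimately show ?thesis
    unfolding sum.subset_diff[OF \<open>I \<subseteq> {1..N}\<close> finite_atLeastAtMost] by linarith
qed

lemma AE1p_mono:
  assumes "p > 0"
    and "(\<Sum>i\<in>{1..N}. (norm (F i) * norm (G i)) powr p)
      \<le> (\<Sum>i\<in>{1..N}. (norm (F i) * norm (G' i)) powr p)"
  shows "AE1p p F G N \<le> AE1p p F G' N"
  unfolding AE1p_def using assms
  by (intro powr_mono2 mult_left_mono mult_nonneg_nonneg sum_nonneg) auto

theorem theorem3p2:
  fixes F :: "nat \<Rightarrow> complex^'n" and N :: nat and p :: real
    and L :: real and \<eta>1 \<eta>2 :: "nat set" and H1 H2 :: "(complex^'n) set"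
  assumes frame: "is_frame F N"
    and L_def: "L = Max ((\<lambda>i. norm (F i) * norm (frame_op_inv F N (F i))) ` {1..N})"
    and eta1_def: "\<eta>1 = {i \<in> {1..N}. norm (F i) * norm (frame_op_inv F N (F i)) = L}"
    and eta2_def: "\<eta>2 = {1..N} - \<eta>1"
    and H1_def: "H1 = vec.span (F ` \<eta>1)"
    and H2_def: "H2 = vec.span (F ` \<eta>2)"
    and hyp_i: "H1 \<inter> H2 = {0}"
    and hyp_ii: "\<exists>c>0. \<forall>i\<in>\<eta>1. norm (F i) = c"
    and hyp_iii: "inj_on F \<eta>2 \<and> vec.independent (F ` \<eta>2)"
    and p: "p > 2"
  shows "optimal_dual_1p p F N (\<lambda>i. frame_op_inv F N (F i))"
proof -
  let ?M = "frame_op_inv F N"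
  obtain c where "c > 0" and norm_F: "\<And>i. i \<in> \<eta>1 \<Longrightarrow> norm (F i) = c"
    using hyp_ii by blast
  have norm_canonical: "norm (?M (F i)) = L / c" if "i \<in> \<eta>1" for i
    using that norm_F[OF that] \<open>c > 0\<close> eta1_def by (auto simp: field_simps)
  have isolated: "F j \<notin> vec.span (F ` ({1..N} - {j}))" if "j \<in> \<eta>2" for j
  proof -
    have "F ` ({1..N} - {j}) = F ` \<eta>1 \<union> F ` (\<eta>2 - {j})"
      using that eta1_def eta2_def by auto
    then show ?thesis
      using not_in_span_if_independent_complement[of F \<eta>1 \<eta>2 j] hyp_i hyp_iii that
        H1_def H2_def by simp
  qed
  have "AE1p p F (\<lambda>i. ?M (F i)) N \<le> AE1p p F G N" if dual: "is_dual F G N" for G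
  proof (rule AE1p_mono)
    have agree: "G j = ?M (F j)" if "j \<in> {1..N} - \<eta>1" for j
      using is_dual_eq_canonical_if_not_in_span[OF frame dual _ isolated] that eta2_def by auto
    show "(\<Sum>i\<in>{1..N}. (norm (F i) * norm (?M (F i))) powr p)
        \<le> (\<Sum>i\<in>{1..N}. (norm (F i) * norm (G i)) powr p)"
      by (rule sum_powr_canonical_le_if_norms_constant[where I = \<eta>1,
            OF frame dual _ _ agree norm_F norm_canonical])
        (use p eta1_def in auto)
  qed (use p in simp)
  then show ?thesis
    unfolding optimal_dual_1p_def using is_dual_canonical[OF frame] by blast
qed

end
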